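(* Let $G$ be a finite group, $\Theta=\sum_{H\le G}n_HH$ a $G$-Brauer relation, and $M$ a finite $\mathbb{Z}[G]$-module. Then \[\frac{\mathcal C_\Theta(M)}{\mathcal C_\Theta(M^\vee)}=\left(\frac{\hat h^{-1}(\Theta,M)}{\hat h^0(\Theta,M)}\right)^2.\]
   Context: Let $G$ be a finite group. A $G$-Brauer relation is a formal sum $\Theta=\sum_{H\le G}n_HH$ over subgroups $H\le G$, $n_H\in\mathbb{Z}$, such that $\bigoplus_{n_H>0}\mathbb{Q}[G/H]^{n_H}\cong\bigoplus_{n_H<0}\mathbb{Q}[G/H]^{-n_H}$ as $\mathbb{Q}[G]$-modules. For a finitely generated $\mathbb{Z}[G]$-module $M$, write $M_{\mathrm{tors}}$ for its $\mathbb{Z}$-torsion subgroup and $M_{\mathrm{tf}}=M/M_{\mathrm{tors}}$. The regulator constant is \[\mathcal C_\Theta(M)=\prod_{H\le G}\Bigl(|M_{\mathrm{tors}}^H|^{-2}\det\bigl(\tfrac{1}{|H|}\langle\cdot,\cdot\rangle|_{(M^H)_{\mathrm{tf}}}\bigr)\Bigr)^{n_H}\in\mathbb{Q}^\times,\] where $\langle\cdot,\cdot\rangle:M\times M\to\mathscr L$ is any $G$-invariant $\mathbb{Z}$-bilinear pairing into a field $\mathscr L\supseteq\mathbb{Q}$ that is non-degenerate on $M_{\mathrm{tf}}$, and the determinant is computed on a $\mathbb{Z}$-basis of $(M^H)_{\mathrm{tf}}$ (the value is independent of the choice of pairing and is positive; for finite $M$ it equals $\prod_H|M^H|^{-2n_H}$).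 For $i\in\mathbb{Z}$ and $H\le G$, $\hat H^i(H,M)$ denotes Tate cohomology, $\hat h^i(H,M)=|\hat H^i(H,M)|$, and $\hat h^i(\Theta,M)=\prod_{H\le G}\hat h^i(H,M)^{n_H}$. For finite $M$, $M^\vee=\mathrm{Hom}(M,\mathbb{Q}/\mathbb{Z})$ with $G$-action $(g\psi)(m)=\psi(g^{-1}m)$. *)

theory Defs
  imports Complex_Main "HOL-Algebra.Coset"
begin

definition qz_rel :: "rat \<Rightarrow> rat \<Rightarrow> bool" where
  "qz_rel x y \<longleftrightarrow> x - y \<in> \<int>"

quotient_type qz = rat / qz_rel
proof (rule equivpI)
  show "reflp qz_rel" by (rule reflpI) (simp add: qz_rel_def)
  show "symp qz_rel"
    by (rule sympI) (metis Ints_minus minus_diff_eq qz_rel_def)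
  show "transp qz_rel"
    by (rule transpI) (metis Ints_add diff_add_cancel add_diff_eq qz_rel_def)
qed

lift_definition qz_add :: "qz \<Rightarrow> qz \<Rightarrow> qz" is "(+)"
  unfolding qz_rel_def
  by (metis Ints_add add_diff_add)

definition is_ZG_module ::
  "('a, 'b) monoid_scheme \<Rightarrow> ('a \<Rightarrow> 'm::ab_group_add \<Rightarrow> 'm) \<Rightarrow> bool" where
  "is_ZG_module G act \<longleftrightarrow>
     (\<forall>g\<in>carrier G. \<forall>x y. act g (x + y) = act g x + act g y) \<and>
     (\<forall>x. act \<one>\<^bsub>G\<^esub> x = x) \<and>
     (\<forall>g\<in>carrier G. \<forall>h\<in>carrier G. \<forall>x. act (g \<otimes>\<^bsub>G\<^esub> h) x = act g (act h x))"

definition fixpts :: "('a \<Rightarrow> 'm \<Rightarrow> 'm) \<Rightarrow> 'a set \<Rightarrow> 'm set" where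
  "fixpts act H = {m. \<forall>h\<in>H. act h m = m}"

definition normH :: "('a \<Rightarrow> 'm::ab_group_add \<Rightarrow> 'm) \<Rightarrow> 'a set \<Rightarrow> 'm \<Rightarrow> 'm" where
  "normH act H m = (\<Sum>h\<in>H. act h m)"

inductive_set zspan :: "'m::ab_group_add set \<Rightarrow> 'm set" for S where
  zspan_zero: "0 \<in> zspan S"
| zspan_gen: "s \<in> S \<Longrightarrow> s \<in> zspan S"
| zspan_add: "x \<in> zspan S \<Longrightarrow> y \<in> zspan S \<Longrightarrow> x + y \<in> zspan S"
| zspan_neg: "x \<in> zspan S \<Longrightarrow> - x \<in> zspan S"

definition augM :: "('a \<Rightarrow> 'm::ab_group_add \<Rightarrow> 'm) \<Rightarrow> 'a set \<Rightarrow> 'm set" where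
  "augM act H = zspan {act h m - m | h m. h \<in> H}"

definition quot_set :: "'m::ab_group_add set \<Rightarrow> 'm set \<Rightarrow> 'm set set" where
  "quot_set A B = (\<lambda>x. (\<lambda>b. x + b) ` B) ` A"

definition tate0 :: "('a \<Rightarrow> 'm::ab_group_add \<Rightarrow> 'm) \<Rightarrow> 'a set \<Rightarrow> 'm set set" where
  "tate0 act H = quot_set (fixpts act H) (range (normH act H))"

definition tate_m1 :: "('a \<Rightarrow> 'm::ab_group_add \<Rightarrow> 'm) \<Rightarrow> 'a set \<Rightarrow> 'm set set" where
  "tate_m1 act H = quot_set {m. normH act H m = 0} (augM act H)"

definition subgroups :: "('a, 'b) monoid_scheme \<Rightarrow> 'a set set" where
  "subgroups G = {H. subgroup H G}"

definition hhat0 :: "('a, 'b) monoid_scheme \<Rightarrow> ('a set \<Rightarrow> int) \<Rightarrow> ('a \<Rightarrow> 'm::ab_group_add \<Rightarrow> 'm) \<Rightarrow> rat" where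
  "hhat0 G n act = (\<Prod>H\<in>subgroups G. (of_nat (card (tate0 act H)) :: rat) powi n H)"

definition hhat_m1 :: "('a, 'b) monoid_scheme \<Rightarrow> ('a set \<Rightarrow> int) \<Rightarrow> ('a \<Rightarrow> 'm::ab_group_add \<Rightarrow> 'm) \<Rightarrow> rat" where
  "hhat_m1 G n act = (\<Prod>H\<in>subgroups G. (of_nat (card (tate_m1 act H)) :: rat) powi n H)"

text \<open>Regulator constant of a finite module: here \<open>M_tors = M\<close>, \<open>(M^H)_tf = 0\<close> and the
  determinant of the empty Gram matrix is 1, so the defining product reduces to
  \<open>\<Prod>_H |M^H|^{-2 n_H}\<close>.  The argument \<open>F\<close> is the set of \<open>H\<close>-fixed points.\<close>
definition reg_const_finite :: "('a, 'b) monoid_scheme \<Rightarrow> ('a set \<Rightarrow> int) \<Rightarrow> ('a set \<Rightarrow> 'x set) \<Rightarrow> rat" where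
  "reg_const_finite G n F = (\<Prod>H\<in>subgroups G. (of_nat (card (F H)) :: rat) powi (-2 * n H))"

definition dual_set :: "('m::ab_group_add \<Rightarrow> qz) set" where
  "dual_set = {\<psi>. \<forall>a b. \<psi> (a + b) = qz_add (\<psi> a) (\<psi> b)}"

definition dual_act :: "('a, 'b) monoid_scheme \<Rightarrow> ('a \<Rightarrow> 'm \<Rightarrow> 'm) \<Rightarrow> 'a \<Rightarrow> ('m \<Rightarrow> qz) \<Rightarrow> ('m \<Rightarrow> qz)" where
  "dual_act G act g \<psi> = (\<lambda>m. \<psi> (act (inv\<^bsub>G\<^esub> g) m))"

definition dual_fixpts :: "('a, 'b) monoid_scheme \<Rightarrow> ('a \<Rightarrow> 'm::ab_group_add \<Rightarrow> 'm) \<Rightarrow> 'a set \<Rightarrow> ('m \<Rightarrow> qz) set" where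
  "dual_fixpts G act H = {\<psi> \<in> dual_set. \<forall>h\<in>H. dual_act G act h \<psi> = \<psi>}"

text \<open>Basis of \<open>\<Oplus>_{s n_H > 0} Q[G/H]^{s n_H}\<close> (for \<open>s = \<plusminus>1\<close>): triples (H, copy index, left coset).\<close>
definition perm_basis :: "('a, 'b) monoid_scheme \<Rightarrow> ('a set \<Rightarrow> int) \<Rightarrow> int \<Rightarrow> ('a set \<times> nat \<times> 'a set) set" where
  "perm_basis G n s = {(H, i, c). subgroup H G \<and> int i < s * n H \<and>
                                  c \<in> {x <#\<^bsub>G\<^esub> H | x. x \<in> carrier G}}"

definition perm_space :: "('a, 'b) monoid_scheme \<Rightarrow> ('a set \<Rightarrow> int) \<Rightarrow> int \<Rightarrow> ('a set \<times> nat \<times> 'a set \<Rightarrow> rat) set" where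
  "perm_space G n s = {f. \<forall>b. b \<notin> perm_basis G n s \<longrightarrow> f b = 0}"

definition perm_act :: "('a, 'b) monoid_scheme \<Rightarrow> 'a \<Rightarrow> ('a set \<times> nat \<times> 'a set \<Rightarrow> rat) \<Rightarrow> ('a set \<times> nat \<times> 'a set \<Rightarrow> rat)" where
  "perm_act G g f = (\<lambda>(H, i, c). f (H, i, inv\<^bsub>G\<^esub> g <#\<^bsub>G\<^esub> c))"

definition brauer_relation :: "('a, 'b) monoid_scheme \<Rightarrow> ('a set \<Rightarrow> int) \<Rightarrow> bool" where
  "brauer_relation G n \<longleftrightarrow>
     (\<forall>H. n H \<noteq> 0 \<longrightarrow> subgroup H G) \<and>
     (\<exists>\<phi>. bij_betw \<phi> (perm_space G n 1) (perm_space G n (-1)) \<and>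
          (\<forall>f\<in>perm_space G n 1. \<forall>f'\<in>perm_space G n 1. \<phi> (\<lambda>b. f b + f' b) = (\<lambda>b. \<phi> f b + \<phi> f' b)) \<and>
          (\<forall>f\<in>perm_space G n 1. \<forall>a. \<phi> (\<lambda>b. a * f b) = (\<lambda>b. a * \<phi> f b)) \<and>
          (\<forall>g\<in>carrier G. \<forall>f\<in>perm_space G n 1. \<phi> (perm_act G g f) = perm_act G g (\<phi> f)))"

end

(*
  For a finite module the identity holds subgroup by subgroup.
  Fix H and write N for the norm map of H and I for the augmentation submodule I_H M. Since
  I <= ker N and N M <= M^H, the Tate groups have orders |ker N| / |I| and |M^H| / |N M|, and
  |ker N| |N M| = |M|. On the dual side, an H-invariant homomorphism M -> Q/Z is the same as one
  vanishing on I, and a finite abelian group A has exactly |A| homomorphisms to Q/Z, so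
  |(M^dual)^H| = |M| / |I|. Hence |(M^dual)^H| / |M^H| = h^-1(H,M) / h^0(H,M), and raising to the
  power 2 n_H and multiplying over H gives the claim.

  Characters are counted one cyclic step at a time: if k is the order of a modulo a subgroup C,
  then |C + <a>| = k |C|, and a character psi of C extends to C + <a> in exactly k ways, one for
  each solution t of k t = psi (k a) in Q/Z.
*)
theory Submission
  imports Defs
begin

section \<open>Multiples and cyclic extensions in finite abelian groups\<close>

fun nat_smult :: "nat \<Rightarrow> 'a::monoid_add \<Rightarrow> 'a" where
  "nat_smult 0 x = 0"
| "nat_smult (Suc k) x = x + nat_smult k x"

lemma nat_smult_add: "nat_smult (i + j) x = nat_smult i x + nat_smult j x"
  by (induction i) (simp_all add: add.assoc)

lemma nat_smult_mult: "nat_smult (i * j) (x :: 'a::comm_monoid_add) = nat_smult i (nat_smult j x)"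
  by (induction i) (simp_all add: nat_smult_add)

lemma nat_smult_minus: "nat_smult k (- x) = - nat_smult k (x :: 'a::ab_group_add)"
  by (induction k) simp_all

lemma nat_smult_div_mod:
  "nat_smult j (x :: 'a::comm_monoid_add) = nat_smult (j div k) (nat_smult k x) + nat_smult (j mod k) x"
proof -
  have "nat_smult j x = nat_smult (j div k * k + j mod k) x"
    by simp
  then show ?thesis
    by (simp only: nat_smult_add nat_smult_mult)
qed

definition add_subgroup :: "'a::ab_group_add set \<Rightarrow> bool" where
  "add_subgroup S \<longleftrightarrow> 0 \<in> S \<and> (\<forall>x\<in>S. \<forall>y\<in>S. x + y \<in> S) \<and> (\<forall>x\<in>S. - x \<in> S)"

lemma add_subgroup_zero: "add_subgroup S \<Longrightarrow> 0 \<in> S"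
  and add_subgroup_add: "add_subgroup S \<Longrightarrow> x \<in> S \<Longrightarrow> y \<in> S \<Longrightarrow> x + y \<in> S"
  and add_subgroup_minus: "add_subgroup S \<Longrightarrow> x \<in> S \<Longrightarrow> - x \<in> S"
  by (simp_all add: add_subgroup_def)

lemma add_subgroup_diff: "add_subgroup S \<Longrightarrow> x \<in> S \<Longrightarrow> y \<in> S \<Longrightarrow> x - y \<in> S"
  using add_subgroup_add add_subgroup_minus by fastforce

lemma add_subgroup_nat_smult: "add_subgroup S \<Longrightarrow> x \<in> S \<Longrightarrow> nat_smult k x \<in> S"
  by (induction k) (simp_all add: add_subgroup_zero add_subgroup_add)

lemma add_subgroup_kernel: "additive f \<Longrightarrow> add_subgroup {x. f x = 0}"
  by (simp add: add_subgroup_def additive.add additive.zero additive.minus)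

lemma add_subgroup_range:
  assumes "additive f"
  shows "add_subgroup (range f)"
proof -
  interpret additive f by fact
  have "0 = f 0" "f x + f y = f (x + y)" "- f x = f (- x)" for x y
    by (simp_all add: zero add minus)
  then show ?thesis
    unfolding add_subgroup_def by blast
qed

lemma add_subgroup_zspan: "add_subgroup (zspan S)"
  by (simp add: add_subgroup_def zspan.intros)

lemma nat_smult_order_exists:
  fixes x :: "'a::{finite, ab_group_add}"
  obtains n where "n > 0" "nat_smult n x = 0"
proof -
  have "\<not> inj (\<lambda>i. nat_smult i x)"
  proof
    assume "inj (\<lambda>i. nat_smult i x)"
    then have "finite (UNIV :: nat set)"
      by (rule finite_imageD [OF finite])
    then show False
      by simp
  qed
  then obtain i j where "i \<noteq> j" "nat_smult i x = nat_smult j x"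
    unfolding inj_def by blast
  then obtain i j where "i < j" "nat_smult i x = nat_smult j x"
    by (metis linorder_neqE_nat)
  moreover from \<open>i < j\<close> have "nat_smult j x = nat_smult (j - i) x + nat_smult i x"
    by (simp add: nat_smult_add [symmetric])
  ultimately show ?thesis
    using that [of "j - i"] by simp
qed

lemma uminus_eq_nat_smult:
  fixes x :: "'a::{finite, ab_group_add}"
  obtains k where "- x = nat_smult k x"
proof -
  obtain n where "n > 0" "nat_smult n x = 0"
    by (rule nat_smult_order_exists)
  then have "x + nat_smult (n - 1) x = 0"
    by (cases n) simp_all
  then show ?thesis
    using that [of "n - 1"] by (simp add: add_eq_0_iff)
qed

definition cyclic_ext :: "'a::monoid_add set \<Rightarrow> 'a \<Rightarrow> 'a set" where
  "cyclic_ext C a = {c + nat_smult j a | c j. c \<in> C}"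

definition order_modulo :: "'a::monoid_add set \<Rightarrow> 'a \<Rightarrow> nat" where
  "order_modulo C a = (LEAST k. 0 < k \<and> nat_smult k a \<in> C)"

context
  fixes C :: "'a::{finite, ab_group_add} set" and a :: 'a
  assumes C: "add_subgroup C"
begin

lemma order_modulo_pos: "0 < order_modulo C a"
  and nat_smult_order_modulo: "nat_smult (order_modulo C a) a \<in> C"
proof -
  obtain n where "n > 0" "nat_smult n a = 0"
    by (rule nat_smult_order_exists)
  with C have "0 < n \<and> nat_smult n a \<in> C"
    by (simp add: add_subgroup_zero)
  then have "0 < order_modulo C a \<and> nat_smult (order_modulo C a) a \<in> C"
    unfolding order_modulo_def by (rule LeastI)
  then show "0 < order_modulo C a" "nat_smult (order_modulo C a) a \<in> C"
    by simp_all
qed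

lemma nat_smult_notin_below_order_modulo:
  "0 < j \<Longrightarrow> j < order_modulo C a \<Longrightarrow> nat_smult j a \<notin> C"
  unfolding order_modulo_def using not_less_Least by blast

lemma add_subgroup_cyclic_ext: "add_subgroup (cyclic_ext C a)"
  unfolding add_subgroup_def
proof (intro conjI ballI)
  have "0 = 0 + nat_smult 0 a"
    by simp
  then show "0 \<in> cyclic_ext C a"
    unfolding cyclic_ext_def using C add_subgroup_zero by blast
next
  fix x y assume "x \<in> cyclic_ext C a" "y \<in> cyclic_ext C a"
  then obtain c j c' j' where "c \<in> C" "c' \<in> C" "x = c + nat_smult j a" "y = c' + nat_smult j' a"
    unfolding cyclic_ext_def by blast
  then have "x + y = (c + c') + nat_smult (j + j') a" "c + c' \<in> C"
    using C by (simp_all add: nat_smult_add algebra_simps add_subgroup_add)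
  then show "x + y \<in> cyclic_ext C a"
    unfolding cyclic_ext_def by blast
next
  fix x assume "x \<in> cyclic_ext C a"
  then obtain c j where "c \<in> C" "x = c + nat_smult j a"
    unfolding cyclic_ext_def by blast
  moreover obtain k where "- a = nat_smult k a"
    by (rule uminus_eq_nat_smult)
  ultimately have "- x = - c + nat_smult (j * k) a" "- c \<in> C"
    using C by (simp_all add: nat_smult_mult nat_smult_minus [symmetric] mult.commute add_subgroup_minus)
  then show "- x \<in> cyclic_ext C a"
    unfolding cyclic_ext_def by blast
qed

lemma subset_cyclic_ext: "C \<subseteq> cyclic_ext C a"
  unfolding cyclic_ext_def by (force intro: exI [of _ 0])

lemma mem_cyclic_ext: "a \<in> cyclic_ext C a"
  unfolding cyclic_ext_def using C add_subgroup_zero by (force intro!: exI [of _ 1])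

lemma cyclic_ext_reduce:
  assumes "c \<in> C"
  defines "k \<equiv> order_modulo C a"
  shows "c + nat_smult j a = (c + nat_smult (j div k) (nat_smult k a)) + nat_smult (j mod k) a"
    and "c + nat_smult (j div k) (nat_smult k a) \<in> C" "j mod k < k"
  using assms order_modulo_pos nat_smult_order_modulo
  by (simp_all add: nat_smult_div_mod [of j a k] add.assoc add_subgroup_add add_subgroup_nat_smult C)

lemma cyclic_ext_repr_unique:
  assumes "c \<in> C" "c' \<in> C" "j < order_modulo C a" "j' < order_modulo C a"
    and "c + nat_smult j a = c' + nat_smult j' a"
  shows "c = c' \<and> j = j'"
proof -
  have "c = c' \<and> j = j'" if "c \<in> C" "c' \<in> C" "j \<le> j'" "j' < order_modulo C a"
    and "c + nat_smult j a = c' + nat_smult j' a" for c c' j j'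
  proof -
    from that(3) have "nat_smult j' a = nat_smult (j' - j) a + nat_smult j a"
      by (simp add: nat_smult_add [symmetric])
    with that(5) have "c = c' + nat_smult (j' - j) a"
      by (simp add: add.assoc [symmetric])
    then have "nat_smult (j' - j) a = c - c'"
      by simp
    with that(1,2) C have "nat_smult (j' - j) a \<in> C"
      by (simp add: add_subgroup_diff)
    with that(3,4) have "j' - j = 0"
      using nat_smult_notin_below_order_modulo [of "j' - j"] by linarith
    with \<open>c = _\<close> that(3) show ?thesis
      by simp
  qed
  from this [of c c' j j'] this [of c' c j' j] assms show ?thesis
    by (cases "j \<le> j'") simp_all
qed

lemma bij_betw_cyclic_ext:
  "bij_betw (\<lambda>(c, j). c + nat_smult j a) (C \<times> {..<order_modulo C a}) (cyclic_ext C a)"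
proof (rule bij_betw_imageI)
  show "inj_on (\<lambda>(c, j). c + nat_smult j a) (C \<times> {..<order_modulo C a})"
    using cyclic_ext_repr_unique by (auto intro!: inj_onI)
  show "(\<lambda>(c, j). c + nat_smult j a) ` (C \<times> {..<order_modulo C a}) = cyclic_ext C a"
    (is "?f ` ?A = _")
  proof
    show "?f ` ?A \<subseteq> cyclic_ext C a"
      unfolding cyclic_ext_def by auto
    show "cyclic_ext C a \<subseteq> ?f ` ?A"
    proof
      fix x assume "x \<in> cyclic_ext C a"
      then obtain c j where "c \<in> C" "x = c + nat_smult j a"
        unfolding cyclic_ext_def by blast
      with cyclic_ext_reduce [of c j] show "x \<in> ?f ` ?A"
        by (auto intro!: image_eqI [where x = "(_, j mod order_modulo C a)"])
    qed
  qed
qed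

lemma card_cyclic_ext: "card (cyclic_ext C a) = card C * order_modulo C a"
  using bij_betw_same_card [OF bij_betw_cyclic_ext] by (simp add: card_cartesian_product)

end

section \<open>The group \<open>\<bbbQ>/\<int>\<close>\<close>

instantiation qz :: ab_group_add
begin

lift_definition zero_qz :: qz is "0 :: rat" .

definition plus_qz :: "qz \<Rightarrow> qz \<Rightarrow> qz" where
  "plus_qz = qz_add"

lift_definition uminus_qz :: "qz \<Rightarrow> qz" is "uminus :: rat \<Rightarrow> rat"
  unfolding qz_rel_def by (metis Ints_minus minus_diff_minus)

lift_definition minus_qz :: "qz \<Rightarrow> qz \<Rightarrow> qz" is "(-) :: rat \<Rightarrow> rat \<Rightarrow> rat"
  unfolding qz_rel_def by (drule (1) Ints_diff) (simp add: algebra_simps)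

instance
proof
  fix a b c :: qz
  show "a + b + c = a + (b + c)" unfolding plus_qz_def by transfer (simp add: qz_rel_def add.assoc)
  show "a + b = b + a" unfolding plus_qz_def by transfer (simp add: qz_rel_def add.commute)
  show "0 + a = a" unfolding plus_qz_def by transfer (simp add: qz_rel_def)
  show "- a + a = 0" unfolding plus_qz_def by transfer (simp add: qz_rel_def)
  show "a - b = a + - b" unfolding plus_qz_def by transfer (simp add: qz_rel_def)
qed

end

lemma abs_qz_add: "abs_qz x + abs_qz y = abs_qz (x + y)"
  by (simp add: plus_qz_def qz_add.abs_eq)

lemma abs_qz_zero: "abs_qz 0 = 0"
  by (simp add: zero_qz_def)

lemma abs_qz_eq_iff: "abs_qz x = abs_qz y \<longleftrightarrow> x - y \<in> \<int>"
  by (simp add: qz.abs_eq_iff qz_rel_def)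

lemma qz_cases [cases type: qz]:
  obtains r where "s = abs_qz r"
  using Quotient3_abs_rep [OF Quotient3_qz] by metis

lemma nat_smult_abs_qz: "nat_smult k (abs_qz q) = abs_qz (of_nat k * q)"
  by (induction k) (simp_all add: abs_qz_zero abs_qz_add distrib_right)

lemma abs_qz_shift_div_inj:
  assumes "i < k" "j < k" "abs_qz ((r + of_nat i) / of_nat k) = abs_qz ((r + of_nat j) / of_nat k)"
  shows "i = j"
proof -
  have "(r + of_nat i) / of_nat k - (r + of_nat j) / of_nat k = of_int (int i - int j) / of_nat k"
    by (simp add: add_divide_distrib diff_divide_distrib)
  with assms(3) obtain m where "of_int (int i - int j) / (of_nat k :: rat) = of_int m"
    unfolding abs_qz_eq_iff by (metis Ints_cases)
  with assms(1) have "(of_int (int i - int j) :: rat) = of_int (m * int k)"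
    by (simp add: divide_eq_eq)
  then have "int i = int j + m * int k"
    by linarith
  then have "int i mod int k = int j mod int k"
    by simp
  with assms(1,2) show "i = j"
    by simp
qed

lemma card_nat_smult_eq_qz:
  assumes "k > 0"
  shows "card {t :: qz. nat_smult k t = s} = k"
proof -
  obtain r where r: "s = abs_qz r" by (cases s)
  define root where "root i = abs_qz ((r + of_nat i) / of_nat k)" for i :: nat
  have "bij_betw root {..<k} {t. nat_smult k t = s}"
  proof (rule bij_betwI')
    show "root i = root j \<longleftrightarrow> i = j" if "i \<in> {..<k}" "j \<in> {..<k}" for i j
      using that abs_qz_shift_div_inj unfolding root_def by auto
    show "root i \<in> {t. nat_smult k t = s}" for i
      using assms by (simp add: root_def r nat_smult_abs_qz abs_qz_eq_iff)
  next
    fix t assume "t \<in> {t. nat_smult k t = s}"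
    then have t: "nat_smult k t = s" by simp
    obtain q where q: "t = abs_qz q" by (cases t)
    from t obtain m where m: "of_nat k * q = r + of_int m"
      unfolding r q nat_smult_abs_qz abs_qz_eq_iff by (auto elim!: Ints_cases simp: algebra_simps)
    define i where "i = nat (m mod int k)"
    have "m = int k * (m div int k) + int i"
      unfolding i_def using assms by simp
    then have "(of_int m :: rat) = of_nat k * of_int (m div int k) + of_nat i"
      by (metis of_int_add of_int_mult of_int_of_nat_eq)
    with m assms have "q - (r + of_nat i) / of_nat k = of_int (m div int k)"
      by (simp add: field_simps)
    then have "t = root i"
      unfolding q root_def abs_qz_eq_iff by simp
    moreover have "i < k"
      unfolding i_def using assms by (simp add: nat_less_iff)
    ultimately show "\<exists>i\<in>{..<k}. t = root i" by blast
  qed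
  from bij_betw_same_card [OF this] show ?thesis
    by simp
qed

lemma dual_set_eq_additive: "dual_set = {\<psi>. additive \<psi>}"
  by (simp add: dual_set_def additive_def plus_qz_def)

section \<open>Counting characters\<close>

definition additive_on :: "'a::plus set \<Rightarrow> ('a \<Rightarrow> 'b::plus) \<Rightarrow> bool" where
  "additive_on C f \<longleftrightarrow> (\<forall>x\<in>C. \<forall>y\<in>C. f (x + y) = f x + f y)"

text \<open>The \<open>\<bbbQ>/\<int>\<close>-valued characters of \<open>C/I\<close>; they are made unique by vanishing outside \<open>C\<close>.\<close>
definition characters :: "'a::ab_group_add set \<Rightarrow> 'a set \<Rightarrow> ('a \<Rightarrow> qz) set" where
  "characters C I = {\<psi>. additive_on C \<psi> \<and> (\<forall>x\<in>I. \<psi> x = 0) \<and> (\<forall>x. x \<notin> C \<longrightarrow> \<psi> x = 0)}"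

lemma additive_on_UNIV: "additive_on UNIV f \<longleftrightarrow> additive f"
  by (simp add: additive_on_def additive_def)

lemma additive_on_zero:
  fixes f :: "'a::ab_group_add \<Rightarrow> 'b::ab_group_add"
  assumes "add_subgroup C" "additive_on C f"
  shows "f 0 = 0"
  using assms by (simp add: additive_on_def add_subgroup_def) (metis add_cancel_right_right)

lemma additive_on_nat_smult:
  fixes f :: "'a::ab_group_add \<Rightarrow> 'b::ab_group_add"
  assumes "add_subgroup C" "additive_on C f" "x \<in> C"
  shows "f (nat_smult k x) = nat_smult k (f x)"
  using assms by (induction k)
    (simp_all add: additive_on_zero additive_on_def add_subgroup_nat_smult)

lemma characters_self: "characters I I = {\<lambda>_. 0}"
  by (auto simp: characters_def additive_on_def fun_eq_iff) blast

context
  fixes C I :: "'a::{finite, ab_group_add} set" and a :: 'a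
  assumes C: "add_subgroup C" and I_subset: "I \<subseteq> C"
begin

lemma restrict_character:
  assumes "\<phi> \<in> characters (cyclic_ext C a) I"
  shows "(\<lambda>x. if x \<in> C then \<phi> x else 0) \<in> characters C I"
  using assms I_subset subset_cyclic_ext [OF C] add_subgroup_add [OF C]
  by (auto simp: characters_def additive_on_def subset_iff)

lemma character_cyclic_ext_eq:
  assumes "\<phi> \<in> characters (cyclic_ext C a) I" "c \<in> C"
  shows "\<phi> (c + nat_smult j a) = \<phi> c + nat_smult j (\<phi> a)"
proof -
  have \<phi>: "additive_on (cyclic_ext C a) \<phi>"
    using assms(1) by (simp add: characters_def)
  have "c \<in> cyclic_ext C a" "nat_smult j a \<in> cyclic_ext C a"
    using assms(2) subset_cyclic_ext [OF C] mem_cyclic_ext [OF C]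
      add_subgroup_nat_smult [OF add_subgroup_cyclic_ext [OF C]] by auto
  with \<phi> show ?thesis
    using additive_on_nat_smult [OF add_subgroup_cyclic_ext [OF C] \<phi> mem_cyclic_ext [OF C]]
    by (simp add: additive_on_def)
qed

text \<open>The extension of \<open>\<psi>\<close> sending \<open>a\<close> to \<open>t\<close>, read off from the normal form \<open>c + j a\<close>
  with \<open>c \<in> C\<close> and \<open>j\<close> below the order of \<open>a\<close> modulo \<open>C\<close>.\<close>
definition extend_char :: "('a \<Rightarrow> qz) \<Rightarrow> qz \<Rightarrow> 'a \<Rightarrow> qz" where
  "extend_char \<psi> t x =
    (if x \<in> cyclic_ext C a then
      (case the_inv_into (C \<times> {..<order_modulo C a}) (\<lambda>(c, j). c + nat_smult j a) x of
        (c, j) \<Rightarrow> \<psi> c + nat_smult j t)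
     else 0)"

lemma extend_char_eq:
  assumes \<psi>: "\<psi> \<in> characters C I"
    and t: "nat_smult (order_modulo C a) t = \<psi> (nat_smult (order_modulo C a) a)"
    and "c \<in> C"
  shows "extend_char \<psi> t (c + nat_smult j a) = \<psi> c + nat_smult j t"
proof -
  define k where "k = order_modulo C a"
  let ?c = "c + nat_smult (j div k) (nat_smult k a)"
  note reduce = cyclic_ext_reduce [OF C \<open>c \<in> C\<close>, where a = a and j = j, folded k_def]
  have \<psi>_add: "additive_on C \<psi>"
    using \<psi> by (simp add: characters_def)
  let ?f = "\<lambda>(c, j). c + nat_smult j a"
  have "inj_on ?f (C \<times> {..<k})"
    using bij_betw_imp_inj_on [OF bij_betw_cyclic_ext [OF C]] by (simp add: k_def)
  then have "the_inv_into (C \<times> {..<k}) ?f (c + nat_smult j a) = (?c, j mod k)"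
    using the_inv_into_f_f [of ?f "C \<times> {..<k}" "(?c, j mod k)"] reduce by (simp add: add.assoc)
  moreover have "c + nat_smult j a \<in> cyclic_ext C a"
    using \<open>c \<in> C\<close> unfolding cyclic_ext_def by blast
  ultimately have "extend_char \<psi> t (c + nat_smult j a) = \<psi> ?c + nat_smult (j mod k) t"
    by (simp add: extend_char_def k_def)
  also have "\<psi> ?c = \<psi> c + nat_smult (j div k) (nat_smult k t)"
  proof -
    have ka: "nat_smult k a \<in> C"
      using nat_smult_order_modulo [OF C] by (simp add: k_def)
    then have "\<psi> ?c = \<psi> c + \<psi> (nat_smult (j div k) (nat_smult k a))"
      using \<psi>_add \<open>c \<in> C\<close> add_subgroup_nat_smult [OF C] by (simp add: additive_on_def)
    also have "\<psi> (nat_smult (j div k) (nat_smult k a)) = nat_smult (j div k) (nat_smult k t)"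
      using additive_on_nat_smult [OF C \<psi>_add ka] t by (simp add: k_def)
    finally show ?thesis .
  qed
  also have "\<dots> + nat_smult (j mod k) t = \<psi> c + nat_smult j t"
    by (simp add: nat_smult_div_mod [of j t k] add.assoc)
  finally show ?thesis .
qed

lemma extend_char_mem_characters:
  assumes \<psi>: "\<psi> \<in> characters C I"
    and t: "nat_smult (order_modulo C a) t = \<psi> (nat_smult (order_modulo C a) a)"
  shows "extend_char \<psi> t \<in> characters (cyclic_ext C a) I"
  unfolding characters_def additive_on_def
proof (intro CollectI conjI ballI allI impI)
  note ext_eq = extend_char_eq [OF \<psi> t]
  fix x y assume "x \<in> cyclic_ext C a" "y \<in> cyclic_ext C a"
  then obtain c j c' j' where "c \<in> C" "c' \<in> C" "x = c + nat_smult j a" "y = c' + nat_smult j' a"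
    unfolding cyclic_ext_def by blast
  then have "extend_char \<psi> t (x + y) = extend_char \<psi> t ((c + c') + nat_smult (j + j') a)"
    by (simp add: nat_smult_add algebra_simps)
  also have "\<dots> = \<psi> (c + c') + nat_smult (j + j') t"
    using \<open>c \<in> C\<close> \<open>c' \<in> C\<close> by (simp add: ext_eq add_subgroup_add C)
  also have "\<dots> = (\<psi> c + nat_smult j t) + (\<psi> c' + nat_smult j' t)"
    using \<psi> \<open>c \<in> C\<close> \<open>c' \<in> C\<close>
    by (simp add: characters_def additive_on_def nat_smult_add algebra_simps)
  also have "\<dots> = extend_char \<psi> t x + extend_char \<psi> t y"
    using \<open>c \<in> C\<close> \<open>c' \<in> C\<close> \<open>x = _\<close> \<open>y = _\<close> by (simp add: ext_eq)
  finally show "extend_char \<psi> t (x + y) = extend_char \<psi> t x + extend_char \<psi> t y" .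
next
  fix x assume "x \<in> I"
  with extend_char_eq [OF \<psi> t, of x 0] I_subset \<psi> show "extend_char \<psi> t x = 0"
    by (auto simp: characters_def)
next
  fix x assume "x \<notin> cyclic_ext C a"
  then show "extend_char \<psi> t x = 0"
    by (simp add: extend_char_def)
qed

lemma characters_cyclic_ext_eqI:
  assumes \<phi>: "\<phi> \<in> characters (cyclic_ext C a) I" and \<phi>': "\<phi>' \<in> characters (cyclic_ext C a) I"
    and "\<forall>c\<in>C. \<phi> c = \<phi>' c" "\<phi> a = \<phi>' a"
  shows "\<phi> = \<phi>'"
proof
  fix x
  show "\<phi> x = \<phi>' x"
  proof (cases "x \<in> cyclic_ext C a")
    case True
    then obtain c j where "c \<in> C" "x = c + nat_smult j a"
      unfolding cyclic_ext_def by blast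
    with assms(3,4) show ?thesis
      using character_cyclic_ext_eq [OF \<phi>] character_cyclic_ext_eq [OF \<phi>'] by simp
  next
    case False
    with \<phi> \<phi>' show ?thesis
      by (simp add: characters_def)
  qed
qed

lemma card_characters_cyclic_ext:
  assumes "finite (characters C I)"
  shows "finite (characters (cyclic_ext C a) I)"
    and "card (characters (cyclic_ext C a) I) = card (characters C I) * order_modulo C a"
proof -
  define k where "k = order_modulo C a"
  define roots where "roots \<psi> = {t. nat_smult k t = \<psi> (nat_smult k a)}" for \<psi> :: "'a \<Rightarrow> qz"
  define res where "res \<phi> = ((\<lambda>x. if x \<in> C then \<phi> x else 0), \<phi> a)" for \<phi> :: "'a \<Rightarrow> qz"
  have card_roots: "card (roots \<psi>) = k" for \<psi>
    using card_nat_smult_eq_qz [OF order_modulo_pos [OF C]] by (simp add: roots_def k_def)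
  have finite_roots: "finite (roots \<psi>)" for \<psi>
    using card_roots order_modulo_pos [OF C] by (intro card_ge_0_finite) (simp add: k_def)
  have "bij_betw res (characters (cyclic_ext C a) I) (Sigma (characters C I) roots)"
  proof (rule bij_betw_imageI)
    show "inj_on res (characters (cyclic_ext C a) I)"
    proof (rule inj_onI)
      fix \<phi> \<phi>' assume chars: "\<phi> \<in> characters (cyclic_ext C a) I" "\<phi>' \<in> characters (cyclic_ext C a) I"
        and "res \<phi> = res \<phi>'"
      then have restr: "(\<lambda>x. if x \<in> C then \<phi> x else 0) = (\<lambda>x. if x \<in> C then \<phi>' x else 0)"
        and "\<phi> a = \<phi>' a"
        by (simp_all add: res_def)
      have "\<forall>c\<in>C. \<phi> c = \<phi>' c"
        using fun_cong [OF restr] by (metis (full_types))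
      with chars \<open>\<phi> a = \<phi>' a\<close> show "\<phi> = \<phi>'"
        by (intro characters_cyclic_ext_eqI)
    qed
    show "res ` characters (cyclic_ext C a) I = Sigma (characters C I) roots"
    proof
      show "res ` characters (cyclic_ext C a) I \<subseteq> Sigma (characters C I) roots"
      proof (rule image_subsetI)
        fix \<phi> assume \<phi>: "\<phi> \<in> characters (cyclic_ext C a) I"
        have "\<phi> 0 = 0"
          using \<phi> by (intro additive_on_zero [OF add_subgroup_cyclic_ext [OF C, of a]])
            (simp add: characters_def)
        with character_cyclic_ext_eq [OF \<phi>, of 0 k] add_subgroup_zero [OF C]
        have "\<phi> (nat_smult k a) = nat_smult k (\<phi> a)"
          by simp
        then show "res \<phi> \<in> Sigma (characters C I) roots"
          using restrict_character [OF \<phi>] nat_smult_order_modulo [OF C]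
          by (simp add: res_def roots_def k_def)
      qed
      show "Sigma (characters C I) roots \<subseteq> res ` characters (cyclic_ext C a) I"
      proof (rule subsetI, elim SigmaE)
        fix p \<psi> t assume \<psi>: "\<psi> \<in> characters C I" and "t \<in> roots \<psi>" and p: "p = (\<psi>, t)"
        then have t: "nat_smult (order_modulo C a) t = \<psi> (nat_smult (order_modulo C a) a)"
          by (simp add: roots_def k_def)
        have "\<psi> 0 = 0"
          using \<psi> by (intro additive_on_zero [OF C]) (simp add: characters_def)
        then have "extend_char \<psi> t a = t"
          using extend_char_eq [OF \<psi> t, of 0 1] add_subgroup_zero [OF C] by simp
        moreover have "(\<lambda>x. if x \<in> C then extend_char \<psi> t x else 0) = \<psi>"
          using extend_char_eq [OF \<psi> t, of _ 0] \<psi> by (auto simp: characters_def)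
        ultimately have "res (extend_char \<psi> t) = (\<psi>, t)"
          by (simp add: res_def)
        with extend_char_mem_characters [OF \<psi> t] show "p \<in> res ` characters (cyclic_ext C a) I"
          unfolding p by (metis rev_image_eqI)
      qed
    qed
  qed
  moreover have "finite (Sigma (characters C I) roots)"
    using assms finite_roots by blast
  moreover have "card (Sigma (characters C I) roots) = card (characters C I) * k"
    using assms finite_roots by (simp add: card_SigmaI card_roots)
  ultimately show "finite (characters (cyclic_ext C a) I)"
    and "card (characters (cyclic_ext C a) I) = card (characters C I) * order_modulo C a"
    unfolding k_def using bij_betw_finite bij_betw_same_card by metis+
qed

end

lemma card_characters_UNIV:
  fixes I :: "'a::{finite, ab_group_add} set"
  assumes I: "add_subgroup I"
  shows "card (characters UNIV I) * card I = card (UNIV :: 'a set)"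
proof -
  define span where "span xs = foldr (\<lambda>a C. cyclic_ext C a) xs I" for xs
  have "add_subgroup (span xs) \<and> I \<subseteq> span xs \<and> set xs \<subseteq> span xs \<and> finite (characters (span xs) I)
    \<and> card (characters (span xs) I) * card I = card (span xs)" for xs
  proof (induction xs)
    case Nil
    then show ?case
      by (simp add: span_def I characters_self)
  next
    case (Cons a xs)
    then have C: "add_subgroup (span xs)" "I \<subseteq> span xs" "set xs \<subseteq> span xs"
      "finite (characters (span xs) I)" "card (characters (span xs) I) * card I = card (span xs)"
      by simp_all
    have "span (a # xs) = cyclic_ext (span xs) a"
      by (simp add: span_def)
    moreover have "card (characters (cyclic_ext (span xs) a) I) * card I = card (cyclic_ext (span xs) a)"
      using card_characters_cyclic_ext(2) [OF C(1,2,4)] card_cyclic_ext [OF C(1)] C(5)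
      by (simp add: algebra_simps)
    moreover have "I \<subseteq> cyclic_ext (span xs) a" "set xs \<subseteq> cyclic_ext (span xs) a"
      using C(2,3) subset_cyclic_ext [OF C(1)] by blast+
    ultimately show ?case
      using add_subgroup_cyclic_ext [OF C(1)] mem_cyclic_ext [OF C(1)]
        card_characters_cyclic_ext(1) [OF C(1,2,4)] by simp
  qed
  moreover obtain xs :: "'a list" where "set xs = UNIV"
    using finite_list [OF finite_UNIV] by blast
  ultimately show ?thesis
    by (metis top.extremum_uniqueI)
qed

section \<open>Counting cosets\<close>

lemma card_eq_card_fibre_times_card_image:
  assumes "finite A" "\<And>x. x \<in> A \<Longrightarrow> card {y \<in> A. f y = f x} = k"
  shows "card A = k * card (f ` A)"
proof -
  have "card A = (\<Sum>z\<in>f ` A. card {y \<in> A. f y = z})"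
    using sum.image_gen [OF assms(1), of "\<lambda>_. 1 :: nat" f] by simp
  also have "\<dots> = (\<Sum>z\<in>f ` A. k)"
    using assms(2) by (intro sum.cong) auto
  finally show ?thesis
    by simp
qed

lemma add_coset_eq:
  assumes "add_subgroup B" "y \<in> (+) x ` B"
  shows "(+) y ` B = (+) x ` B"
proof -
  obtain b where b: "b \<in> B" "y = x + b"
    using assms(2) by blast
  have "(+) (x + b) ` B \<subseteq> (+) x ` B" "(+) x ` B \<subseteq> (+) (x + b) ` B"
  proof safe
    fix c assume "c \<in> B"
    with assms(1) b(1) show "x + b + c \<in> (+) x ` B"
      by (auto simp: add.assoc intro: add_subgroup_add)
    from assms(1) b(1) \<open>c \<in> B\<close> show "x + c \<in> (+) (x + b) ` B"
      by (intro rev_image_eqI [of "c - b"]) (simp_all add: add_subgroup_diff)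
  qed
  with b(2) show ?thesis
    by blast
qed

lemma card_quot_set:
  fixes A B :: "'a::ab_group_add set"
  assumes "finite A" "add_subgroup B" "\<And>x b. x \<in> A \<Longrightarrow> b \<in> B \<Longrightarrow> x + b \<in> A"
  shows "card (quot_set A B) * card B = card A"
proof -
  have "{y \<in> A. (+) y ` B = (+) x ` B} = (+) x ` B" if "x \<in> A" for x
  proof
    show "{y \<in> A. (+) y ` B = (+) x ` B} \<subseteq> (+) x ` B"
      using add_subgroup_zero [OF assms(2)] by force
    show "(+) x ` B \<subseteq> {y \<in> A. (+) y ` B = (+) x ` B}"
      using add_coset_eq [OF assms(2)] assms(3) [OF that] by blast
  qed
  then have "card A = card B * card ((\<lambda>x. (+) x ` B) ` A)"
    using assms(1) by (intro card_eq_card_fibre_times_card_image) (simp_all add: card_image)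
  then show ?thesis
    by (simp add: quot_set_def)
qed

lemma card_kernel_times_card_range:
  fixes h :: "'a::{finite, ab_group_add} \<Rightarrow> 'b::ab_group_add"
  assumes "additive h"
  shows "card {x. h x = 0} * card (range h) = card (UNIV :: 'a set)"
proof -
  interpret additive h by fact
  have "{y. h y = h x} = (+) x ` {x. h x = 0}" for x
  proof safe
    fix y assume "h y = h x"
    then have "h (y - x) = 0"
      by (simp add: diff)
    then show "y \<in> (+) x ` {x. h x = 0}"
      by (intro rev_image_eqI [of "y - x"]) simp_all
  qed (simp add: add)
  then have "card (UNIV :: 'a set) = card {x. h x = 0} * card (range h)"
    by (intro card_eq_card_fibre_times_card_image) (simp_all add: card_image)
  then show ?thesis
    by simp
qed

section \<open>Tate cohomology and fixed points of a finite module\<close>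

locale subgroup_module = group G + subgroup H G
  for G :: "('a, 'b) monoid_scheme" (structure) and H :: "'a set" +
  fixes act :: "'a \<Rightarrow> 'm::{finite, ab_group_add} \<Rightarrow> 'm"
  assumes ZG_module: "is_ZG_module G act"
begin

lemma additive_act: "h \<in> H \<Longrightarrow> additive (act h)"
  using ZG_module by (simp add: is_ZG_module_def additive_def)

lemma act_mult: "g \<in> H \<Longrightarrow> h \<in> H \<Longrightarrow> act (g \<otimes> h) m = act g (act h m)"
  using ZG_module by (simp add: is_ZG_module_def)

lemma additive_normH: "additive (normH act H)"
  by (simp add: additive_def normH_def additive.add [OF additive_act] sum.distrib)

lemma normH_act: "h \<in> H \<Longrightarrow> normH act H (act h m) = normH act H m"
  unfolding normH_def
  by (rule sum.reindex_bij_witness [where i = "\<lambda>x. x \<otimes> inv h" and j = "\<lambda>x. x \<otimes> h"])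
    (simp_all add: m_assoc act_mult)

lemma act_normH: "h \<in> H \<Longrightarrow> act h (normH act H m) = normH act H m"
  unfolding normH_def additive.sum [OF additive_act]
  by (rule sum.reindex_bij_witness [where i = "\<lambda>x. inv h \<otimes> x" and j = "\<lambda>x. h \<otimes> x"])
    (simp_all add: m_assoc [symmetric] act_mult)

lemma add_subgroup_fixpts: "add_subgroup (fixpts act H)"
  by (simp add: add_subgroup_def fixpts_def additive.zero additive.add additive.minus additive_act)

lemma range_normH_subset_fixpts: "range (normH act H) \<subseteq> fixpts act H"
  by (auto simp: fixpts_def act_normH)

lemma augM_subset_kernel: "augM act H \<subseteq> {m. normH act H m = 0}"
proof
  fix x assume "x \<in> augM act H"
  then show "x \<in> {m. normH act H m = 0}"
    unfolding augM_def
  proof (induction rule: zspan.induct)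
    case (zspan_gen s)
    then show ?case
      by (auto simp: additive.diff [OF additive_normH] normH_act)
  qed (simp_all add: additive.zero additive.add additive.minus additive_normH)
qed

lemma dual_fixpts_eq_characters: "dual_fixpts G act H = characters UNIV (augM act H)"
proof -
  have "(\<forall>h\<in>H. (\<lambda>m. \<psi> (act (inv h) m)) = \<psi>) \<longleftrightarrow> (\<forall>x\<in>augM act H. \<psi> x = 0)"
    if "additive \<psi>" for \<psi> :: "'m \<Rightarrow> qz"
  proof
    assume fixed: "\<forall>h\<in>H. (\<lambda>m. \<psi> (act (inv h) m)) = \<psi>"
    have "\<psi> (act h m) = \<psi> m" if "h \<in> H" for h m
      using fun_cong [OF fixed [rule_format, of "inv h"], of m] that by simp
    show "\<forall>x\<in>augM act H. \<psi> x = 0"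
    proof
      fix x assume "x \<in> augM act H"
      then show "\<psi> x = 0"
        unfolding augM_def
      proof (induction rule: zspan.induct)
        case (zspan_gen s)
        with \<open>\<And>h m. h \<in> H \<Longrightarrow> \<psi> (act h m) = \<psi> m\<close> show ?case
          by (auto simp: additive.diff [OF that])
      qed (simp_all add: additive.zero additive.add additive.minus that)
    qed
  next
    assume vanish: "\<forall>x\<in>augM act H. \<psi> x = 0"
    have "\<psi> (act (inv h) m) = \<psi> m" if "h \<in> H" for h m
    proof -
      have "act (inv h) m - m \<in> augM act H"
        unfolding augM_def using that by (blast intro: zspan_gen)
      with vanish have "\<psi> (act (inv h) m - m) = 0"
        by blast
      then show ?thesis
        by (simp add: additive.diff [OF \<open>additive \<psi>\<close>])
    qed
    then show "\<forall>h\<in>H. (\<lambda>m. \<psi> (act (inv h) m)) = \<psi>"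
      by blast
  qed
  then show ?thesis
    by (auto simp: dual_fixpts_def dual_set_eq_additive dual_act_def characters_def additive_on_UNIV)
qed

lemma card_dual_fixpts: "card (dual_fixpts G act H) * card (augM act H) = card (UNIV :: 'm set)"
  unfolding dual_fixpts_eq_characters augM_def
  by (rule card_characters_UNIV [OF add_subgroup_zspan])

lemma card_tate0: "card (tate0 act H) * card (range (normH act H)) = card (fixpts act H)"
  unfolding tate0_def
  using add_subgroup_range [OF additive_normH] range_normH_subset_fixpts add_subgroup_fixpts
  by (intro card_quot_set) (auto intro: add_subgroup_add)

lemma card_tate_m1: "card (tate_m1 act H) * card (augM act H) = card {m. normH act H m = 0}"
proof -
  have "x + b \<in> {m. normH act H m = 0}" if "x \<in> {m. normH act H m = 0}" "b \<in> augM act H" for x b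
    using that augM_subset_kernel add_subgroup_add [OF add_subgroup_kernel [OF additive_normH]]
    by blast
  then show ?thesis
    unfolding tate_m1_def augM_def by (intro card_quot_set [OF finite add_subgroup_zspan])
qed

lemma card_dual_fixpts_times_card_tate0:
  "card (dual_fixpts G act H) * card (tate0 act H) = card (tate_m1 act H) * card (fixpts act H)"
proof -
  let ?D = "card (dual_fixpts G act H)" and ?T0 = "card (tate0 act H)"
    and ?T1 = "card (tate_m1 act H)" and ?I = "card (augM act H)"
    and ?N = "card (range (normH act H))" and ?F = "card (fixpts act H)"
  have "?D * ?T0 * (?I * ?N) = card (UNIV :: 'm set) * ?F"
    using card_dual_fixpts card_tate0 by (metis mult.assoc mult.left_commute)
  also have "\<dots> = ?T1 * ?F * (?I * ?N)"
    using card_kernel_times_card_range [OF additive_normH] card_tate_m1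
    by (metis mult.assoc mult.commute)
  finally have "?D * ?T0 * (?I * ?N) = ?T1 * ?F * (?I * ?N)" .
  moreover have "?I * ?N \<noteq> 0"
    using add_subgroup_zero [OF add_subgroup_zspan] by (auto simp: augM_def)
  ultimately show ?thesis
    by (metis mult_right_cancel)
qed

lemma fixpts_nonempty: "fixpts act H \<noteq> {}"
  using add_subgroup_zero [OF add_subgroup_fixpts] by blast

lemma tate0_nonempty: "tate0 act H \<noteq> {}"
  using fixpts_nonempty by (simp add: tate0_def quot_set_def)

lemma card_dual_fixpts_div_card_fixpts:
  "(of_nat (card (dual_fixpts G act H)) :: 'f::field_char_0) / of_nat (card (fixpts act H))
    = of_nat (card (tate_m1 act H)) / of_nat (card (tate0 act H))"
proof -
  have "(of_nat (card (dual_fixpts G act H)) :: 'f) * of_nat (card (tate0 act H))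
    = of_nat (card (tate_m1 act H)) * of_nat (card (fixpts act H))"
    using card_dual_fixpts_times_card_tate0 by (metis of_nat_mult)
  moreover have "(of_nat (card (fixpts act H)) :: 'f) \<noteq> 0" "(of_nat (card (tate0 act H)) :: 'f) \<noteq> 0"
    using fixpts_nonempty tate0_nonempty by simp_all
  ultimately show ?thesis
    by (simp add: frac_eq_eq)
qed

end

lemma power_int_neg_double_divide:
  fixes a b :: "'a::field"
  shows "a powi (-2 * n) / b powi (-2 * n) = ((b / a) powi n) ^ 2"
proof -
  have "a powi (-2 * n) / b powi (-2 * n) = (a / b) powi (- (2 * n))"
    by (simp add: power_int_divide_distrib)
  also have "\<dots> = (b / a) powi (2 * n)"
    by (simp only: power_int_minus power_int_inverse [symmetric] inverse_divide)
  also have "\<dots> = ((b / a) powi n) ^ 2"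
    by (simp add: power_int_mult mult.commute [of 2])
  finally show ?thesis .
qed

theorem mainTheorem6:
  fixes G :: "('a, 'b) monoid_scheme"
    and n :: "'a set \<Rightarrow> int"
    and act :: "'a \<Rightarrow> 'm::{ab_group_add, finite} \<Rightarrow> 'm"
  assumes "group G" and "finite (carrier G)"
    and "brauer_relation G n"
    and "is_ZG_module G act"
  shows "reg_const_finite G n (fixpts act) / reg_const_finite G n (dual_fixpts G act)
         = (hhat_m1 G n act / hhat0 G n act) ^ 2"
proof -
  have factor: "(of_nat (card (fixpts act H)) :: rat) powi (-2 * n H)
      / of_nat (card (dual_fixpts G act H)) powi (-2 * n H)
    = (of_nat (card (tate_m1 act H)) powi n H / of_nat (card (tate0 act H)) powi n H) ^ 2"
    if "H \<in> subgroups G" for H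
  proof -
    interpret subgroup_module G H act
      using assms(1,4) that by (simp add: subgroup_module_def subgroup_module_axioms_def subgroups_def)
    show ?thesis
      unfolding power_int_neg_double_divide card_dual_fixpts_div_card_fixpts
      by (simp only: power_int_divide_distrib)
  qed
  have "reg_const_finite G n (fixpts act) / reg_const_finite G n (dual_fixpts G act)
    = (\<Prod>H\<in>subgroups G. (of_nat (card (fixpts act H)) :: rat) powi (-2 * n H)
        / of_nat (card (dual_fixpts G act H)) powi (-2 * n H))"
    by (simp add: reg_const_finite_def prod_dividef)
  also have "\<dots> = (\<Prod>H\<in>subgroups G.
      (of_nat (card (tate_m1 act H)) powi n H / of_nat (card (tate0 act H)) powi n H) ^ 2)"
    by (rule prod.cong [OF refl factor])
  also have "\<dots> = (hhat_m1 G n act / hhat0 G n act) ^ 2"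
    by (simp add: hhat_m1_def hhat0_def prod_dividef [symmetric] prod_power_distrib)
  finally show ?thesis .
qed

end
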